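(* Let $F$ be a DQCNF and let $\varphi, \psi$ be autarkies of $F$. Then the composition $\varphi \circ \psi$ is again an autarky of $F$.
   Context: A DQCNF $F$ consists of a finite set $X$ of universal variables, a finite set $Y$ of existential variables (disjoint from $X$), for each $y \in Y$ a dependency set $D(y) \subseteq X$, and a matrix which is a CNF, i.e. a finite set of clauses over the variables $X \cup Y$. An autarky $\varphi$ of $F$ is a partial assignment that assigns to some set $\mathrm{var}(\varphi) \subseteq Y$ of existential variables boolean functions $\varphi(y)$ depending only on the variables in $D(y)$, such that every clause of $F$ containing a literal whose variable lies in $\mathrm{var}(\varphi)$ becomes a tautology after substituting $\varphi(y)$ for each $y \in \mathrm{var}(\varphi)$, i.e. evaluates to true under every assignment to all universal variables and all existential variables not in $\mathrm{var}(\varphi)$. For partial assignments $\varphi, \psi$ of this kind, the composition $\varphi \circ \psi$ is the partial assignment with $\mathrm{var}(\varphi \circ \psi) = \mathrm{var}(\varphi) \cup \mathrm{var}(\psi)$ which assigns $\psi(y)$ to $y \in \mathrm{var}(\psi)$ and $\varphi(y)$ to $y \in \mathrm{var}(\varphi) \setminus \mathrm{var}(\psi)$. *)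

theory Defs
  imports Main
begin

datatype 'v lit = Pos 'v | Neg 'v

fun lvar :: "'v lit \<Rightarrow> 'v" where
  "lvar (Pos v) = v" | "lvar (Neg v) = v"

fun lval :: "('v \<Rightarrow> bool) \<Rightarrow> 'v lit \<Rightarrow> bool" where
  "lval \<alpha> (Pos v) = \<alpha> v" | "lval \<alpha> (Neg v) = (\<not> \<alpha> v)"

type_synonym 'v clause = "'v lit set"

record 'v dqcnf =
  univ :: "'v set"
  exist :: "'v set"
  dep :: "'v \<Rightarrow> 'v set"
  matrix :: "'v clause set"

definition dqcnf :: "'v dqcnf \<Rightarrow> bool" where
  "dqcnf F \<longleftrightarrow> finite (univ F) \<and> finite (exist F) \<and> univ F \<inter> exist F = {}
     \<and> (\<forall>y\<in>exist F. dep F y \<subseteq> univ F)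
     \<and> finite (matrix F) \<and> (\<forall>C\<in>matrix F. finite C \<and> lvar ` C \<subseteq> univ F \<union> exist F)"

text \<open>A partial assignment maps some existential variables to Boolean functions,
  represented as functions of a total assignment of all variables.\<close>
type_synonym 'v passign = "'v \<Rightarrow> (('v \<Rightarrow> bool) \<Rightarrow> bool) option"

definition depends_only :: "'v set \<Rightarrow> (('v \<Rightarrow> bool) \<Rightarrow> bool) \<Rightarrow> bool" where
  "depends_only S f \<longleftrightarrow> (\<forall>a b. (\<forall>x\<in>S. a x = b x) \<longrightarrow> f a = f b)"

definition passign_of :: "'v dqcnf \<Rightarrow> 'v passign \<Rightarrow> bool" where
  "passign_of F \<phi> \<longleftrightarrow> dom \<phi> \<subseteq> exist F \<and>
     (\<forall>y f. \<phi> y = Some f \<longrightarrow> depends_only (dep F y) f)"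

definition subst :: "'v passign \<Rightarrow> ('v \<Rightarrow> bool) \<Rightarrow> ('v \<Rightarrow> bool)" where
  "subst \<phi> \<alpha> = (\<lambda>v. case \<phi> v of Some f \<Rightarrow> f \<alpha> | None \<Rightarrow> \<alpha> v)"

definition autarky :: "'v dqcnf \<Rightarrow> 'v passign \<Rightarrow> bool" where
  "autarky F \<phi> \<longleftrightarrow> passign_of F \<phi> \<and>
     (\<forall>C\<in>matrix F. (\<exists>l\<in>C. lvar l \<in> dom \<phi>) \<longrightarrow>
        (\<forall>\<alpha>. \<exists>l\<in>C. lval (subst \<phi> \<alpha>) l))"

definition pcomp :: "'v passign \<Rightarrow> 'v passign \<Rightarrow> 'v passign" (infixl "\<circ>\<^sub>a" 55) where
  "pcomp \<phi> \<psi> = (\<lambda>y. case \<psi> y of Some f \<Rightarrow> Some f | None \<Rightarrow> \<phi> y)"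

end

theory Submission
  imports Defs
begin

(* The Boolean functions of a DQCNF depend on universal variables only, and no autarky
   assigns those. Hence substituting phi o psi is the same as substituting phi and then psi,
   so a clause touching var(psi) is satisfied because psi is an autarky. A clause touching
   only var(phi) contains no variable of psi, and on its variables phi o psi agrees with phi. *)

lemma lval_cong: "a (lvar l) = b (lvar l) \<Longrightarrow> lval a l = lval b l"
  by (cases l) auto

lemma dom_pcomp: "dom (\<phi> \<circ>\<^sub>a \<psi>) = dom \<phi> \<union> dom \<psi>"
  unfolding pcomp_def by (auto split: option.splits)

lemma subst_outside: "v \<notin> dom \<phi> \<Longrightarrow> subst \<phi> \<alpha> v = \<alpha> v"
  by (auto simp: subst_def split: option.splits)

lemma subst_pcomp_outside: "v \<notin> dom \<psi> \<Longrightarrow> subst (\<phi> \<circ>\<^sub>a \<psi>) \<alpha> v = subst \<phi> \<alpha> v"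
  by (auto simp: subst_def pcomp_def split: option.splits)

lemma depends_only_subst:
  assumes "depends_only S f" and "S \<inter> dom \<phi> = {}"
  shows "f (subst \<phi> \<alpha>) = f \<alpha>"
  using assms subst_outside unfolding depends_only_def by (metis disjoint_iff_not_equal)

lemma subst_pcomp:
  assumes "\<And>y f. \<psi> y = Some f \<Longrightarrow> depends_only (D y) f"
    and "\<And>y. y \<in> dom \<psi> \<Longrightarrow> D y \<inter> dom \<phi> = {}"
  shows "subst (\<phi> \<circ>\<^sub>a \<psi>) \<alpha> = subst \<psi> (subst \<phi> \<alpha>)"
proof
  fix v
  show "subst (\<phi> \<circ>\<^sub>a \<psi>) \<alpha> v = subst \<psi> (subst \<phi> \<alpha>) v"
  proof (cases "\<psi> v")
    case None
    then show ?thesis by (simp add: subst_def pcomp_def)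
  next
    case (Some f)
    with assms have "depends_only (D v) f" and "D v \<inter> dom \<phi> = {}"
      by blast+
    then have "f (subst \<phi> \<alpha>) = f \<alpha>"
      by (rule depends_only_subst)
    with Some show ?thesis by (simp add: subst_def pcomp_def)
  qed
qed

lemma passign_of_pcomp:
  "passign_of F \<phi> \<Longrightarrow> passign_of F \<psi> \<Longrightarrow> passign_of F (\<phi> \<circ>\<^sub>a \<psi>)"
  unfolding passign_of_def dom_pcomp by (auto simp: pcomp_def split: option.splits)

lemma dep_disjoint_dom:
  assumes "dqcnf F" and "passign_of F \<phi>" and "y \<in> exist F"
  shows "dep F y \<inter> dom \<phi> = {}"
proof -
  have "dom \<phi> \<subseteq> exist F"
    using assms(2) unfolding passign_of_def by simp
  moreover have "univ F \<inter> exist F = {}" and "dep F y \<subseteq> univ F"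
    using assms(1,3) unfolding dqcnf_def by simp_all
  ultimately show ?thesis by blast
qed

lemma subst_pcomp_passign_of:
  assumes "dqcnf F" and "passign_of F \<phi>" and "passign_of F \<psi>"
  shows "subst (\<phi> \<circ>\<^sub>a \<psi>) \<alpha> = subst \<psi> (subst \<phi> \<alpha>)"
proof (rule subst_pcomp)
  show "depends_only (dep F y) f" if "\<psi> y = Some f" for y f
    using assms(3) that unfolding passign_of_def by blast
  show "dep F y \<inter> dom \<phi> = {}" if "y \<in> dom \<psi>" for y
  proof (rule dep_disjoint_dom[OF assms(1,2)])
    show "y \<in> exist F"
      using assms(3) that unfolding passign_of_def by blast
  qed
qed

lemma autarky_satisfies:
  "autarky F \<phi> \<Longrightarrow> C \<in> matrix F \<Longrightarrow> l \<in> C \<Longrightarrow> lvar l \<in> dom \<phi> \<Longrightarrow>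
    \<exists>l\<in>C. lval (subst \<phi> \<alpha>) l"
  unfolding autarky_def by blast

theorem lemma2:
  fixes F :: "'v dqcnf" and \<phi> \<psi> :: "'v passign"
  assumes "dqcnf F" and "autarky F \<phi>" and "autarky F \<psi>"
  shows "autarky F (\<phi> \<circ>\<^sub>a \<psi>)"
proof -
  have assigns: "passign_of F \<phi>" "passign_of F \<psi>"
    using assms(2,3) unfolding autarky_def by auto
  have subst_eq: "subst (\<phi> \<circ>\<^sub>a \<psi>) \<alpha> = subst \<psi> (subst \<phi> \<alpha>)" for \<alpha>
    using assms(1) assigns by (rule subst_pcomp_passign_of)
  have "\<exists>l\<in>C. lval (subst (\<phi> \<circ>\<^sub>a \<psi>) \<alpha>) l"
    if C: "C \<in> matrix F" and l: "l \<in> C" "lvar l \<in> dom (\<phi> \<circ>\<^sub>a \<psi>)" for C l \<alpha>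
  proof (cases "\<exists>l\<in>C. lvar l \<in> dom \<psi>")
    case True
    then show ?thesis
      using autarky_satisfies[OF assms(3) C] unfolding subst_eq by blast
  next
    case False
    with l have "lvar l \<in> dom \<phi>" by (auto simp: dom_pcomp)
    then obtain k where "k \<in> C" "lval (subst \<phi> \<alpha>) k"
      using autarky_satisfies[OF assms(2) C l(1)] by blast
    moreover from False \<open>k \<in> C\<close> have "lvar k \<notin> dom \<psi>" by blast
    ultimately show ?thesis
      using subst_pcomp_outside lval_cong by metis
  qed
  then show ?thesis
    using passign_of_pcomp[OF assigns] unfolding autarky_def by blast
qed

end
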